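(* Let $(\mathbb{S},\Sigma)$ be a measurable space, let $\{\mu_n\}_{n=1,2,\ldots}$ be finite measures on $(\mathbb{S},\Sigma)$ converging in total variation to a finite measure $\mu$, and let $f,f_n$ ($n=1,2,\ldots$) be measurable $[-\infty,+\infty]$-valued functions on $\mathbb{S}$ with $f\in L^1(\mathbb{S};\mu)$ and $f_n\in L^1(\mathbb{S};\mu_n)$ for each $n$. Then $$\lim_{n\to\infty}\sup_{C\in\Sigma}\Big|\int_C f_n(s)\,\mu_n(ds)-\int_C f(s)\,\mu(ds)\Big|=0$$ if and only if both of the following hold: (i) $f_n$ converges to $f$ in measure $\mu$; (ii) $\{f_n\}_{n=1,2,\ldots}$ is asymptotically uniformly integrable with respect to $\{\mu_n\}_{n=1,2,\ldots}$.
   Context: A sequence $\{h_n\}$ is asymptotically uniformly integrable with respect to $\{\mu_n\}$ if $\lim_{K\to+\infty}\limsup_{n\to\infty}\int_{\mathbb{S}}|h_n|\,\mathbf{1}\{|h_n|\ge K\}\,d\mu_n=0$. *)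

theory Defs
  imports "HOL-Analysis.Analysis"
begin

definition ereal_integrable :: "'a measure \<Rightarrow> ('a \<Rightarrow> ereal) \<Rightarrow> bool" where
  "ereal_integrable M f \<longleftrightarrow>
     f \<in> borel_measurable M \<and> (\<integral>\<^sup>+ x. e2ennreal \<bar>f x\<bar> \<partial>M) < \<infinity>"

definition ereal_set_integral :: "'a measure \<Rightarrow> 'a set \<Rightarrow> ('a \<Rightarrow> ereal) \<Rightarrow> ereal" where
  "ereal_set_integral M C f =
     enn2ereal (\<integral>\<^sup>+ x. e2ennreal (max (f x) 0) * indicator C x \<partial>M)
   - enn2ereal (\<integral>\<^sup>+ x. e2ennreal (max (- f x) 0) * indicator C x \<partial>M)"

definition tv_converges :: "(nat \<Rightarrow> 'a measure) \<Rightarrow> 'a measure \<Rightarrow> bool" where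
  "tv_converges \<mu>s \<mu> \<longleftrightarrow>
     (\<lambda>n. SUP C \<in> sets \<mu>. ereal \<bar>measure (\<mu>s n) C - measure \<mu> C\<bar>) \<longlonglongrightarrow> 0"

definition converges_in_measure ::
  "'a measure \<Rightarrow> (nat \<Rightarrow> 'a \<Rightarrow> ereal) \<Rightarrow> ('a \<Rightarrow> ereal) \<Rightarrow> bool" where
  "converges_in_measure \<mu> fs f \<longleftrightarrow>
     (\<forall>\<epsilon>>0. (\<lambda>n. emeasure \<mu> {s \<in> space \<mu>. ereal \<epsilon> \<le> \<bar>fs n s - f s\<bar>}) \<longlonglongrightarrow> 0)"

definition asympt_unif_integrable :: "(nat \<Rightarrow> 'a \<Rightarrow> ereal) \<Rightarrow> (nat \<Rightarrow> 'a measure) \<Rightarrow> bool" where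
  "asympt_unif_integrable fs \<mu>s \<longleftrightarrow>
     ((\<lambda>K::real. limsup (\<lambda>n. \<integral>\<^sup>+ s. e2ennreal \<bar>fs n s\<bar> * indicator {s. ereal K \<le> \<bar>fs n s\<bar>} s \<partial>(\<mu>s n)))
        \<longlongrightarrow> 0) at_top"

end

theory Submission
  imports Defs
begin

text \<open>
  Write \<open>\<nu>\<^sub>n(C) = \<integral>\<^sub>C f\<^sub>n d\<mu>\<^sub>n\<close> and \<open>\<nu>(C) = \<integral>\<^sub>C f d\<mu>\<close>; as \<open>f\<close> and \<open>f\<^sub>n\<close> are a.e. finite, everything
  reduces to real-valued densities. Total-variation convergence enters through one estimate:
  a measurable function bounded by \<open>K\<close> has integrals against \<open>\<mu>\<^sub>n\<close> and \<open>\<mu>\<close> differing by at most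
  \<open>2K sup\<^sub>C |\<mu>\<^sub>n(C) - \<mu>(C)|\<close> (approximate it by staircase functions).

  If \<open>\<nu>\<^sub>n \<rightarrow> \<nu>\<close> uniformly on sets, then \<open>\<integral>\<^bsub>|f\<^sub>n| \<ge> K\<^esub> |f\<^sub>n| d\<mu>\<^sub>n = \<nu>\<^sub>n{f\<^sub>n \<ge> K} - \<nu>\<^sub>n{f\<^sub>n \<le> -K}\<close>
  is eventually close to a \<open>\<nu>\<close>-integral over \<open>{|f\<^sub>n| \<ge> K}\<close>. For \<open>K = 0\<close> this bounds the
  \<open>L\<^sup>1\<close>-norms, so by Markov's inequality the sets \<open>{|f\<^sub>n| \<ge> L}\<close> are uniformly small, and absolute
  continuity of \<open>\<integral>|f| d\<mu>\<close> then gives asymptotic uniform integrability. On a set \<open>C\<close> where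
  \<open>|f\<^sub>n| \<le> L\<close> and \<open>f\<^sub>n - f \<ge> \<epsilon>\<close>, the bounded estimate turns \<open>\<nu>\<^sub>n(C) - \<nu>(C)\<close> into
  \<open>\<integral>\<^sub>C (f\<^sub>n - f) d\<mu> \<ge> \<epsilon> \<mu>(C)\<close>, which gives convergence in measure.
  Conversely, truncating at level \<open>K\<close> splits \<open>\<nu>\<^sub>n(C) - \<nu>(C)\<close> into two tails, a bounded term
  controlled by total variation, and a term controlled by convergence in measure.
\<close>

section \<open>Bounded integrands against measures close in total variation\<close>

lemma card_multiples_le:
  fixes \<delta> y :: real
  assumes "\<delta> > 0" "0 \<le> y" "y \<le> real n * \<delta>"
  shows "card {j \<in> {1..n}. real j * \<delta> \<le> y} = nat \<lfloor>y / \<delta>\<rfloor>"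
proof -
  have le_n: "y / \<delta> \<le> real n"
    using assms by (simp add: pos_divide_le_eq)
  then have "\<lfloor>y / \<delta>\<rfloor> \<le> \<lfloor>real n\<rfloor>"
    by (rule floor_mono)
  then have "nat \<lfloor>y / \<delta>\<rfloor> \<le> n"
    by simp
  then have "{j \<in> {1..n}. real j * \<delta> \<le> y} = {1..nat \<lfloor>y / \<delta>\<rfloor>}"
    using assms le_n by (auto simp: le_nat_floor pos_le_divide_eq[symmetric] le_floor_iff le_nat_iff)
  then show ?thesis by simp
qed

lemma abs_integral_diff_le:
  fixes f h w :: "'a \<Rightarrow> real"
  assumes "integrable M f" "integrable M h" "integrable M w"
    and "\<And>x. x \<in> space M \<Longrightarrow> \<bar>f x - h x\<bar> \<le> w x"
  shows "\<bar>(\<integral>x. f x \<partial>M) - (\<integral>x. h x \<partial>M)\<bar> \<le> (\<integral>x. w x \<partial>M)"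
proof -
  have "\<bar>(\<integral>x. f x \<partial>M) - (\<integral>x. h x \<partial>M)\<bar> = \<bar>\<integral>x. f x - h x \<partial>M\<bar>"
    using assms by simp
  also have "\<dots> \<le> (\<integral>x. \<bar>f x - h x\<bar> \<partial>M)"
    by (rule integral_abs_bound)
  also have "\<dots> \<le> (\<integral>x. w x \<partial>M)"
    using assms by (intro integral_mono) auto
  finally show ?thesis .
qed

lemma integral_staircase_approx:
  fixes h :: "'a \<Rightarrow> real"
  assumes "finite_measure M" "h \<in> borel_measurable M" "\<delta> > 0"
    and h_bounds: "\<And>x. x \<in> space M \<Longrightarrow> 0 \<le> h x \<and> h x \<le> real n * \<delta>"
  shows "\<bar>(\<integral>x. h x \<partial>M) - (\<Sum>j\<in>{1..n}. \<delta> * measure M {x \<in> space M. real j * \<delta> \<le> h x})\<bar>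
           \<le> \<delta> * measure M (space M)"
proof -
  interpret finite_measure M by fact
  define A where "A j = {x \<in> space M. real j * \<delta> \<le> h x}" for j :: nat
  define s where "s x = (\<Sum>j\<in>{1..n}. \<delta> * indicator (A j) x)" for x
  have A_sets: "A j \<in> sets M" for j
    unfolding A_def using assms(2) by measurable
  have s_approx: "h x - \<delta> \<le> s x \<and> s x \<le> h x" if x: "x \<in> space M" for x
  proof -
    have "s x = \<delta> * card {j \<in> {1..n}. real j * \<delta> \<le> h x}"
      using x by (simp add: s_def A_def sum_distrib_left[symmetric] indicator_def sum.If_cases Int_def)
    also have "\<dots> = \<delta> * of_int \<lfloor>h x / \<delta>\<rfloor>"
      using card_multiples_le[OF \<open>\<delta> > 0\<close>] h_bounds[OF x] \<open>\<delta> > 0\<close> by simp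
    finally show ?thesis
      using \<open>\<delta> > 0\<close> floor_divide_lower[of \<delta> "h x"] floor_divide_upper[of \<delta> "h x"]
      by (simp add: algebra_simps)
  qed
  have int_h: "integrable M h"
    using h_bounds assms(2) by (intro integrable_const_bound[where B = "real n * \<delta>"]) auto
  have int_A: "integrable M (\<lambda>x. \<delta> * indicator (A j) x)" for j
    using A_sets by (intro integrable_mult_right integrable_real_indicator) (auto simp: emeasure_eq_measure)
  then have int_s: "integrable M s"
    unfolding s_def by (intro Bochner_Integration.integrable_sum)
  have "(\<integral>x. s x \<partial>M) = (\<Sum>j\<in>{1..n}. \<integral>x. \<delta> * indicator (A j) x \<partial>M)"
    unfolding s_def using int_A by (rule Bochner_Integration.integral_sum)
  also have "\<dots> = (\<Sum>j\<in>{1..n}. \<delta> * measure M (A j))"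
    using A_sets by (simp add: Int_absorb2 sets.sets_into_space)
  finally have "(\<integral>x. s x \<partial>M) = (\<Sum>j\<in>{1..n}. \<delta> * measure M (A j))" .
  moreover have "\<bar>(\<integral>x. h x \<partial>M) - (\<integral>x. s x \<partial>M)\<bar> \<le> (\<integral>x. \<delta> \<partial>M)"
    by (intro abs_integral_diff_le int_h int_s) (auto simp: abs_le_iff dest: s_approx)
  ultimately have "\<bar>(\<integral>x. h x \<partial>M) - (\<Sum>j\<in>{1..n}. \<delta> * measure M (A j))\<bar> \<le> (\<integral>x. \<delta> \<partial>M)"
    by simp
  then show ?thesis by (simp add: A_def mult.commute)
qed

lemma bounded_nonneg_integral_diff_le:
  fixes h :: "'a \<Rightarrow> real"
  assumes sets_eq: "sets N = sets M" and "finite_measure N" "finite_measure M" "K > 0"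
    and h_meas: "h \<in> borel_measurable M" and h_bounds: "\<And>x. x \<in> space M \<Longrightarrow> 0 \<le> h x \<and> h x \<le> K"
    and measure_diff: "\<And>C. C \<in> sets M \<Longrightarrow> \<bar>measure N C - measure M C\<bar> \<le> e"
  shows "\<bar>(\<integral>x. h x \<partial>N) - (\<integral>x. h x \<partial>M)\<bar> \<le> K * e"
proof (rule field_le_epsilon)
  fix \<epsilon> :: real assume "\<epsilon> > 0"
  have space_eq: "space N = space M"
    using sets_eq by (rule sets_eq_imp_space_eq)
  define c where "c = measure N (space N) + measure M (space M)"
  obtain n :: nat where n: "max 0 (K * c / \<epsilon>) < real n"
    using reals_Archimedean2 by blast
  define \<delta> where "\<delta> = K / real n"
  have "\<delta> > 0" "K = real n * \<delta>"
    using n \<open>K > 0\<close> by (auto simp: \<delta>_def)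
  have "\<delta> * c \<le> \<epsilon>"
    using n \<open>\<epsilon> > 0\<close> by (simp add: \<delta>_def field_simps)
  define S where "S L = (\<Sum>j\<in>{1..n}. \<delta> * measure L {x \<in> space M. real j * \<delta> \<le> h x})" for L
  have "\<bar>S N - S M\<bar> \<le> (\<Sum>j\<in>{1..n}. \<delta> * e)"
    unfolding S_def sum_subtractf[symmetric] right_diff_distrib[symmetric]
    using \<open>\<delta> > 0\<close> h_meas
    by (intro order.trans[OF sum_abs] sum_mono) (simp add: abs_mult measure_diff)
  also have "\<dots> = K * e"
    using \<open>K = real n * \<delta>\<close> by simp
  finally have "\<bar>S N - S M\<bar> \<le> K * e" .
  moreover have "\<bar>(\<integral>x. h x \<partial>N) - S N\<bar> \<le> \<delta> * measure N (space N)"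
    unfolding S_def space_eq[symmetric]
    using h_meas h_bounds \<open>K = real n * \<delta>\<close>
    by (intro integral_staircase_approx \<open>finite_measure N\<close> \<open>\<delta> > 0\<close>)
      (auto simp: space_eq measurable_cong_sets[OF sets_eq refl])
  moreover have "\<bar>(\<integral>x. h x \<partial>M) - S M\<bar> \<le> \<delta> * measure M (space M)"
    unfolding S_def using h_meas h_bounds \<open>K = real n * \<delta>\<close>
    by (intro integral_staircase_approx \<open>finite_measure M\<close> \<open>\<delta> > 0\<close>) auto
  ultimately show "\<bar>(\<integral>x. h x \<partial>N) - (\<integral>x. h x \<partial>M)\<bar> \<le> K * e + \<epsilon>"
    using \<open>\<delta> * c \<le> \<epsilon>\<close> unfolding c_def by (simp add: algebra_simps abs_le_iff)
qed

lemma bounded_integral_diff_le: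
  fixes h :: "'a \<Rightarrow> real"
  assumes sets_eq: "sets N = sets M" and "finite_measure N" "finite_measure M" "K > 0"
    and h_meas: "h \<in> borel_measurable M" and h_bound: "\<And>x. x \<in> space M \<Longrightarrow> \<bar>h x\<bar> \<le> K"
    and measure_diff: "\<And>C. C \<in> sets M \<Longrightarrow> \<bar>measure N C - measure M C\<bar> \<le> e"
  shows "\<bar>(\<integral>x. h x \<partial>N) - (\<integral>x. h x \<partial>M)\<bar> \<le> 2 * K * e"
proof -
  have space_eq: "space N = space M"
    using sets_eq by (rule sets_eq_imp_space_eq)
  have bound: "\<bar>\<sigma> * h x\<bar> \<le> K" if "x \<in> space M" "\<bar>\<sigma>\<bar> = 1" for \<sigma> x
    using h_bound[OF that(1)] that(2) by (simp add: abs_mult)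
  have split: "(\<integral>x. h x \<partial>L) = (\<integral>x. max (h x) 0 \<partial>L) - (\<integral>x. max (- h x) 0 \<partial>L)"
    if "finite_measure L" "sets L = sets M" for L
  proof -
    interpret finite_measure L by fact
    have "integrable L (\<lambda>x. max (\<sigma> * h x) 0)" if "\<bar>\<sigma>\<bar> = 1" for \<sigma> :: real
      using h_meas bound[OF _ that] \<open>K > 0\<close> sets_eq_imp_space_eq[OF \<open>sets L = sets M\<close>]
      by (intro integrable_const_bound[where B = K])
        (auto intro!: AE_I2 simp: measurable_cong_sets[OF \<open>sets L = sets M\<close> refl] abs_le_iff)
    from this[of 1] this[of "-1"]
    have "(\<integral>x. max (h x) 0 \<partial>L) - (\<integral>x. max (- h x) 0 \<partial>L) = (\<integral>x. max (h x) 0 - max (- h x) 0 \<partial>L)"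
      by simp
    also have "\<dots> = (\<integral>x. h x \<partial>L)"
      by (rule Bochner_Integration.integral_cong) auto
    finally show ?thesis ..
  qed
  have "\<bar>(\<integral>x. max (\<sigma> * h x) 0 \<partial>N) - (\<integral>x. max (\<sigma> * h x) 0 \<partial>M)\<bar> \<le> K * e"
    if "\<bar>\<sigma>\<bar> = 1" for \<sigma> :: real
    using h_meas bound[OF _ that] \<open>K > 0\<close>
    by (intro bounded_nonneg_integral_diff_le assms) (auto simp: abs_le_iff)
  from this[of 1] this[of "-1"] show ?thesis
    using split[OF \<open>finite_measure N\<close> sets_eq] split[OF \<open>finite_measure M\<close> refl] by simp
qed

section \<open>Tails and truncation\<close>

lemma measure_mult_le_set_integral:
  fixes h :: "'a \<Rightarrow> real"
  assumes "finite_measure M" "C \<in> sets M" "integrable M (\<lambda>x. indicator C x * h x)"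
    and "\<And>x. x \<in> C \<Longrightarrow> \<epsilon> \<le> h x"
  shows "\<epsilon> * measure M C \<le> (\<integral>x. indicator C x * h x \<partial>M)"
proof -
  interpret finite_measure M by fact
  have "\<epsilon> * measure M C = (\<integral>x. \<epsilon> * indicator C x \<partial>M)"
    using assms(2) by (simp add: Int_absorb2 sets.sets_into_space)
  also have "\<dots> \<le> (\<integral>x. indicator C x * h x \<partial>M)"
    using assms
    by (intro integral_mono integrable_mult_right integrable_real_indicator)
      (auto simp: indicator_def emeasure_eq_measure)
  finally show ?thesis .
qed

lemma integral_tail_tendsto_0:
  fixes g :: "'a \<Rightarrow> real"
  assumes "integrable M g"
  shows "((\<lambda>K. \<integral>x. \<bar>g x\<bar> * indicator {x \<in> space M. K \<le> \<bar>g x\<bar>} x \<partial>M) \<longlongrightarrow> 0) at_top"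
proof -
  have "((\<lambda>K. \<integral>x. \<bar>g x\<bar> * indicator {x \<in> space M. K \<le> \<bar>g x\<bar>} x \<partial>M) \<longlongrightarrow> (\<integral>x. 0 \<partial>M)) at_top"
  proof (rule integral_dominated_convergence_at_top[where w = "\<lambda>x. \<bar>g x\<bar>"])
    show "AE x in M. ((\<lambda>K. \<bar>g x\<bar> * indicator {x \<in> space M. K \<le> \<bar>g x\<bar>} x) \<longlongrightarrow> 0) at_top"
    proof (rule AE_I2, rule tendsto_eventually)
      fix x
      show "\<forall>\<^sub>F K in at_top. \<bar>g x\<bar> * indicator {x \<in> space M. K \<le> \<bar>g x\<bar>} x = 0"
        using eventually_gt_at_top[of "\<bar>g x\<bar>"] by eventually_elim (simp add: indicator_def)
    qed
  qed (use assms in \<open>auto simp: indicator_def\<close>)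
  then show ?thesis by simp
qed

lemma integral_abs_small_on_small_sets:
  fixes g :: "'a \<Rightarrow> real"
  assumes "finite_measure M" "integrable M g" "\<eta> > 0"
  shows "\<exists>\<delta>>0. \<forall>A\<in>sets M. measure M A \<le> \<delta> \<longrightarrow> (\<integral>x. \<bar>g x\<bar> * indicator A x \<partial>M) \<le> \<eta>"
proof -
  interpret finite_measure M by fact
  define tail where "tail K = (\<integral>x. \<bar>g x\<bar> * indicator {x \<in> space M. K \<le> \<bar>g x\<bar>} x \<partial>M)" for K
  have "\<forall>\<^sub>F K in at_top. tail K < \<eta> / 2 \<and> 1 \<le> K"
    using order_tendstoD(2)[OF integral_tail_tendsto_0[OF assms(2)], of "\<eta> / 2"] \<open>\<eta> > 0\<close>
    by (auto simp: tail_def intro: eventually_conj eventually_ge_at_top)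
  then obtain K where K: "tail K < \<eta> / 2" "1 \<le> K"
    using eventually_happens by fastforce
  have "(\<integral>x. \<bar>g x\<bar> * indicator A x \<partial>M) \<le> \<eta>"
    if A: "A \<in> sets M" "measure M A \<le> \<eta> / (2 * K)" for A
  proof -
    have int_tail: "integrable M (\<lambda>x. \<bar>g x\<bar> * indicator {x \<in> space M. K \<le> \<bar>g x\<bar>} x)"
      using assms(2) by (intro integrable_real_mult_indicator integrable_abs) auto
    have int_A: "integrable M (\<lambda>x. K * indicator A x)"
      using A by (intro integrable_mult_right integrable_real_indicator) (auto simp: emeasure_eq_measure)
    have "(\<integral>x. \<bar>g x\<bar> * indicator A x \<partial>M)
        \<le> (\<integral>x. \<bar>g x\<bar> * indicator {x \<in> space M. K \<le> \<bar>g x\<bar>} x + K * indicator A x \<partial>M)"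
      using A assms(2) int_tail int_A K
      by (intro integral_mono Bochner_Integration.integrable_add integrable_real_mult_indicator integrable_abs)
        (auto simp: indicator_def)
    also have "\<dots> = tail K + K * measure M A"
      using A int_tail int_A by (simp add: tail_def Int_absorb2 sets.sets_into_space)
    also have "\<dots> \<le> \<eta> / 2 + K * (\<eta> / (2 * K))"
      using K A by (intro add_mono mult_left_mono) auto
    also have "\<dots> = \<eta>"
      using K by simp
    finally show ?thesis .
  qed
  then show ?thesis
    using K \<open>\<eta> > 0\<close> by (intro exI[of _ "\<eta> / (2 * K)"]) auto
qed

definition truncate :: "real \<Rightarrow> real \<Rightarrow> real" where
  "truncate K y = max (- K) (min K y)"

lemma truncate_abs_le: "0 \<le> K \<Longrightarrow> \<bar>truncate K y\<bar> \<le> K"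
  by (simp add: truncate_def abs_le_iff)

lemma truncate_dist_le: "\<bar>truncate K a - truncate K b\<bar> \<le> \<bar>a - b\<bar>"
  by (simp add: truncate_def max_def min_def abs_if)

lemma truncate_error_le: "0 \<le> K \<Longrightarrow> \<bar>a - truncate K a\<bar> \<le> \<bar>a\<bar> * indicator {y. K \<le> \<bar>y\<bar>} a"
  by (simp add: truncate_def max_def min_def abs_if indicator_def)

lemma borel_measurable_truncate[measurable]: "truncate K \<in> borel_measurable borel"
  unfolding truncate_def by measurable

lemma integrable_set_truncate:
  assumes "finite_measure M" "h \<in> borel_measurable M" "C \<in> sets M" "0 \<le> K"
  shows "integrable M (\<lambda>x. indicator C x * truncate K (h x))"
proof -
  interpret finite_measure M by fact
  show ?thesis
    using assms truncate_abs_le[OF \<open>0 \<le> K\<close>]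
    by (intro integrable_const_bound[where B = K]) (auto intro!: AE_I2 simp: indicator_def)
qed

lemma set_integral_truncate_error:
  fixes h :: "'a \<Rightarrow> real"
  assumes "finite_measure M" "integrable M h" "C \<in> sets M" "0 \<le> K"
  shows "\<bar>(\<integral>x. indicator C x * h x \<partial>M) - (\<integral>x. indicator C x * truncate K (h x) \<partial>M)\<bar>
           \<le> (\<integral>x. \<bar>h x\<bar> * indicator {x \<in> space M. K \<le> \<bar>h x\<bar>} x \<partial>M)"
proof (rule abs_integral_diff_le)
  show "integrable M (\<lambda>x. indicator C x * h x)"
    using integrable_real_mult_indicator[OF assms(3,2)] by (simp add: mult.commute)
  show "integrable M (\<lambda>x. indicator C x * truncate K (h x))"
    using assms by (intro integrable_set_truncate) auto
  show "integrable M (\<lambda>x. \<bar>h x\<bar> * indicator {x \<in> space M. K \<le> \<bar>h x\<bar>} x)"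
    using assms(2) by (intro integrable_real_mult_indicator integrable_abs) auto
  fix x assume "x \<in> space M"
  then show "\<bar>indicator C x * h x - indicator C x * truncate K (h x)\<bar>
      \<le> \<bar>h x\<bar> * indicator {x \<in> space M. K \<le> \<bar>h x\<bar>} x"
    using truncate_error_le[OF \<open>0 \<le> K\<close>, of "h x"] by (auto simp: indicator_def)
qed

lemma set_integral_truncate_diff_le:
  fixes u v :: "'a \<Rightarrow> real"
  assumes "finite_measure M" "u \<in> borel_measurable M" "v \<in> borel_measurable M" "C \<in> sets M"
    and "0 \<le> K" "0 \<le> \<delta>"
  shows "\<bar>(\<integral>x. indicator C x * truncate K (u x) \<partial>M) - (\<integral>x. indicator C x * truncate K (v x) \<partial>M)\<bar>
           \<le> \<delta> * measure M (space M) + 2 * K * measure M {x \<in> space M. \<delta> \<le> \<bar>u x - v x\<bar>}"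
proof -
  interpret finite_measure M by fact
  define D where "D = {x \<in> space M. \<delta> \<le> \<bar>u x - v x\<bar>}"
  have D_sets: "D \<in> sets M"
    unfolding D_def using assms(2,3) by measurable
  have "\<bar>(\<integral>x. indicator C x * truncate K (u x) \<partial>M) - (\<integral>x. indicator C x * truncate K (v x) \<partial>M)\<bar>
      \<le> (\<integral>x. \<delta> + 2 * K * indicator D x \<partial>M)"
  proof (rule abs_integral_diff_le)
    show "integrable M (\<lambda>x. indicator C x * truncate K (u x))"
      "integrable M (\<lambda>x. indicator C x * truncate K (v x))"
      using assms by (auto intro: integrable_set_truncate)
    show "integrable M (\<lambda>x. \<delta> + 2 * K * indicator D x)"
      using D_sets by (auto simp: emeasure_eq_measure)
    fix x assume "x \<in> space M"
    have "\<bar>truncate K (u x) - truncate K (v x)\<bar> \<le> min \<bar>u x - v x\<bar> (2 * K)"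
      using truncate_dist_le[of K "u x" "v x"] truncate_abs_le[OF \<open>0 \<le> K\<close>, of "u x"]
        truncate_abs_le[OF \<open>0 \<le> K\<close>, of "v x"] by linarith
    then show "\<bar>indicator C x * truncate K (u x) - indicator C x * truncate K (v x)\<bar>
        \<le> \<delta> + 2 * K * indicator D x"
      using \<open>x \<in> space M\<close> assms(5,6) by (auto simp: indicator_def D_def)
  qed
  also have "\<dots> = \<delta> * measure M (space M) + 2 * K * measure M D"
    using D_sets by (simp add: emeasure_eq_measure Int_absorb2 sets.sets_into_space)
  finally show ?thesis
    unfolding D_def .
qed

lemma uniform_limit_iff_SUP_dist_tendsto_0:
  fixes f :: "'i \<Rightarrow> 'b \<Rightarrow> 'c::metric_space"
  assumes "A \<noteq> {}"
  shows "uniform_limit A f l F \<longleftrightarrow> ((\<lambda>n. SUP x\<in>A. ereal (dist (f n x) (l x))) \<longlongrightarrow> 0) F"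
proof
  assume lim: "uniform_limit A f l F"
  show "((\<lambda>n. SUP x\<in>A. ereal (dist (f n x) (l x))) \<longlongrightarrow> 0) F"
  proof (rule order_tendstoI)
    fix a :: ereal assume "a < 0"
    obtain x where "x \<in> A" using assms by blast
    have "a < ereal (dist (f n x) (l x))" for n
      using \<open>a < 0\<close> by (simp add: order.strict_trans2)
    also have "\<dots> n \<le> (SUP x\<in>A. ereal (dist (f n x) (l x)))" for n
      using \<open>x \<in> A\<close> by (rule SUP_upper)
    finally show "\<forall>\<^sub>F n in F. a < (SUP x\<in>A. ereal (dist (f n x) (l x)))"
      by simp
  next
    fix a :: ereal assume "0 < a"
    then obtain r :: real where r: "0 < r" "ereal r < a"
      using ereal_dense2[OF \<open>0 < a\<close>] by auto
    show "\<forall>\<^sub>F n in F. (SUP x\<in>A. ereal (dist (f n x) (l x))) < a"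
      using uniform_limitD[OF lim \<open>0 < r\<close>]
    proof eventually_elim
      case (elim n)
      have "(SUP x\<in>A. ereal (dist (f n x) (l x))) \<le> ereal r"
      proof (rule SUP_least)
        fix x assume "x \<in> A"
        then show "ereal (dist (f n x) (l x)) \<le> ereal r"
          using elim by (simp add: less_imp_le)
      qed
      then show ?case
        using r(2) by (rule order.strict_trans1)
    qed
  qed
next
  assume lim: "((\<lambda>n. SUP x\<in>A. ereal (dist (f n x) (l x))) \<longlongrightarrow> 0) F"
  show "uniform_limit A f l F"
  proof (rule uniform_limitI)
    fix e :: real assume "0 < e"
    have "\<forall>\<^sub>F n in F. (SUP x\<in>A. ereal (dist (f n x) (l x))) < ereal e"
      using order_tendstoD(2)[OF lim] \<open>0 < e\<close> by simp
    then show "\<forall>\<^sub>F n in F. \<forall>x\<in>A. dist (f n x) (l x) < e"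
    proof eventually_elim
      case (elim n)
      show ?case
      proof
        fix x assume "x \<in> A"
        then have "ereal (dist (f n x) (l x)) \<le> (SUP x\<in>A. ereal (dist (f n x) (l x)))"
          by (rule SUP_upper)
        then show "dist (f n x) (l x) < e"
          using elim by (metis order.strict_trans1 less_ereal.simps(1))
      qed
    qed
  qed
qed

lemma tendsto_limsup_ennreal_0_iff:
  fixes T :: "nat \<Rightarrow> real \<Rightarrow> real"
  assumes antimono: "\<And>n K K'. K \<le> K' \<Longrightarrow> T n K' \<le> T n K"
  shows "((\<lambda>K. limsup (\<lambda>n. ennreal (T n K))) \<longlongrightarrow> 0) at_top
    \<longleftrightarrow> (\<forall>\<eta>>0. \<exists>K. \<forall>\<^sub>F n in sequentially. T n K \<le> \<eta>)"
proof
  assume lim: "((\<lambda>K. limsup (\<lambda>n. ennreal (T n K))) \<longlongrightarrow> 0) at_top"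
  show "\<forall>\<eta>>0. \<exists>K. \<forall>\<^sub>F n in sequentially. T n K \<le> \<eta>"
  proof (intro allI impI)
    fix \<eta> :: real assume "\<eta> > 0"
    then obtain K where "limsup (\<lambda>n. ennreal (T n K)) < ennreal \<eta>"
      using order_tendstoD(2)[OF lim, of "ennreal \<eta>"] eventually_happens by fastforce
    then have "\<forall>\<^sub>F n in sequentially. ennreal (T n K) < ennreal \<eta>"
      by (rule Limsup_lessD)
    then have "\<forall>\<^sub>F n in sequentially. T n K \<le> \<eta>"
      by eventually_elim (metis ennreal_leI leD nle_le)
    then show "\<exists>K. \<forall>\<^sub>F n in sequentially. T n K \<le> \<eta>" ..
  qed
next
  assume small: "\<forall>\<eta>>0. \<exists>K. \<forall>\<^sub>F n in sequentially. T n K \<le> \<eta>"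
  show "((\<lambda>K. limsup (\<lambda>n. ennreal (T n K))) \<longlongrightarrow> 0) at_top"
  proof (rule order_tendstoI)
    fix a :: ennreal assume "0 < a"
    then obtain b where "0 < b" "b < a"
      using dense by blast
    define \<eta> where "\<eta> = enn2real b"
    have "b < top"
      using \<open>b < a\<close> top_greatest[of a] by (rule order.strict_trans2)
    then have "0 < \<eta>" "ennreal \<eta> < a"
      using \<open>0 < b\<close> \<open>b < a\<close> by (auto simp: \<eta>_def enn2real_positive_iff)
    obtain K0 where K0: "\<forall>\<^sub>F n in sequentially. T n K0 \<le> \<eta>"
      using small \<open>0 < \<eta>\<close> by blast
    have bound: "limsup (\<lambda>n. ennreal (T n K)) \<le> ennreal \<eta>" if "K0 \<le> K" for K
      using K0 by (intro Limsup_bounded) (auto elim!: eventually_mono intro: ennreal_leI order.trans antimono[OF that])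
    show "\<forall>\<^sub>F K in at_top. limsup (\<lambda>n. ennreal (T n K)) < a"
      using eventually_ge_at_top[of K0]
      by eventually_elim (use bound \<open>ennreal \<eta> < a\<close> in \<open>blast intro: order.strict_trans1\<close>)
  qed simp
qed

lemma measure_tendsto_0_cong:
  assumes "finite_measure M" and sets: "\<And>n. E n \<in> sets M" "\<And>n. R n \<in> sets M" "\<And>n. Z n \<in> sets M"
    and Z: "(\<lambda>n. measure M (Z n)) \<longlonglongrightarrow> 0" and same: "\<And>n. E n - Z n = R n - Z n"
  shows "(\<lambda>n. measure M (E n)) \<longlonglongrightarrow> 0 \<longleftrightarrow> (\<lambda>n. measure M (R n)) \<longlonglongrightarrow> 0"
proof -
  interpret finite_measure M by fact
  have transfer: "(\<lambda>n. measure M (A n)) \<longlonglongrightarrow> 0"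
    if "\<And>n. A n \<in> sets M" "\<And>n. B n \<in> sets M" "\<And>n. A n \<subseteq> B n \<union> Z n"
      and "(\<lambda>n. measure M (B n)) \<longlonglongrightarrow> 0" for A B
  proof (rule Lim_null_comparison)
    show "\<forall>\<^sub>F n in sequentially. norm (measure M (A n)) \<le> measure M (B n) + measure M (Z n)"
      using that sets
      by (intro always_eventually allI) (simp add: order.trans[OF finite_measure_mono measure_Un_le])
    show "(\<lambda>n. measure M (B n) + measure M (Z n)) \<longlonglongrightarrow> 0"
      using tendsto_add[OF that(4) Z] by simp
  qed
  show ?thesis
    using transfer[of E R] transfer[of R E] sets same by blast
qed

lemma tendsto_zero_if_eventually_le:
  fixes x :: "'i \<Rightarrow> real"
  assumes "\<And>n. 0 \<le> x n" "\<And>\<eta>. \<eta> > 0 \<Longrightarrow> \<forall>\<^sub>F n in F. x n \<le> \<eta>"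
  shows "(x \<longlongrightarrow> 0) F"
proof (rule order_tendstoI)
  fix a :: real assume "a < 0"
  then show "\<forall>\<^sub>F n in F. a < x n"
    using assms(1) by (auto intro: always_eventually less_le_trans)
next
  fix a :: real assume "0 < a"
  then show "\<forall>\<^sub>F n in F. x n < a"
    using assms(2)[of "a / 2"] by (auto elim: eventually_mono)
qed

section \<open>Extended-real-valued integrands\<close>

lemma ereal_integrable_AE_finite:
  assumes "ereal_integrable M f"
  shows "AE x in M. \<bar>f x\<bar> \<noteq> \<infinity>"
proof -
  have "AE x in M. e2ennreal \<bar>f x\<bar> \<noteq> \<infinity>"
    using assms by (intro nn_integral_PInf_AE) (auto simp: ereal_integrable_def)
  then show ?thesis
    by eventually_elim auto
qed

lemma ereal_integrable_measure_infinite: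
  assumes "ereal_integrable M f"
  shows "measure M {x \<in> space M. \<bar>f x\<bar> = \<infinity>} = 0"
proof -
  have "f \<in> borel_measurable M"
    using assms by (simp add: ereal_integrable_def)
  then have "{x \<in> space M. \<bar>f x\<bar> = \<infinity>} \<in> sets M"
    by measurable
  then have "emeasure M {x \<in> space M. \<bar>f x\<bar> = \<infinity>} = 0"
    using AE_iff_measurable[of _ M "\<lambda>x. \<bar>f x\<bar> \<noteq> \<infinity>"] ereal_integrable_AE_finite[OF assms] by simp
  then show ?thesis
    by (simp add: measure_def)
qed

lemma integrable_real_of_ereal:
  assumes "ereal_integrable M f"
  shows "integrable M (\<lambda>x. real_of_ereal (f x))"
proof (rule integrableI_bounded)
  have [measurable]: "f \<in> borel_measurable M"
    using assms by (simp add: ereal_integrable_def)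
  show "(\<lambda>x. real_of_ereal (f x)) \<in> borel_measurable M"
    by measurable
  have "(\<integral>\<^sup>+ x. ennreal (norm (real_of_ereal (f x))) \<partial>M) \<le> (\<integral>\<^sup>+ x. e2ennreal \<bar>f x\<bar> \<partial>M)"
  proof (rule nn_integral_mono)
    show "ennreal (norm (real_of_ereal (f x))) \<le> e2ennreal \<bar>f x\<bar>" for x
      by (cases "f x") auto
  qed
  also have "\<dots> < \<infinity>"
    using assms by (simp add: ereal_integrable_def)
  finally show "(\<integral>\<^sup>+ x. ennreal (norm (real_of_ereal (f x))) \<partial>M) < \<infinity>" .
qed

lemma enn2ereal_eq_ereal_enn2real: "x \<noteq> \<infinity> \<Longrightarrow> enn2ereal x = ereal (enn2real x)"
  by (cases x rule: ennreal_cases) auto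

lemma ereal_set_integral_eq_integral:
  assumes f: "ereal_integrable M f" and "C \<in> sets M"
  shows "ereal_set_integral M C f = ereal (\<integral>x. indicator C x * real_of_ereal (f x) \<partial>M)"
proof -
  define u where "u x = indicator C x * real_of_ereal (f x)" for x
  have parts: "(\<integral>\<^sup>+ x. ennreal (\<sigma> * u x) \<partial>M) = (\<integral>\<^sup>+ x. e2ennreal (max (\<sigma> * f x) 0) * indicator C x \<partial>M)"
    "(\<integral>\<^sup>+ x. e2ennreal (max (\<sigma> * f x) 0) * indicator C x \<partial>M) \<noteq> \<infinity>"
    if "\<bar>\<sigma>\<bar> = 1" for \<sigma> :: real
  proof -
    show "(\<integral>\<^sup>+ x. ennreal (\<sigma> * u x) \<partial>M) = (\<integral>\<^sup>+ x. e2ennreal (max (\<sigma> * f x) 0) * indicator C x \<partial>M)"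
      using ereal_integrable_AE_finite[OF f]
      by (intro nn_integral_cong_AE, eventually_elim)
        (use that in \<open>auto simp: u_def indicator_def max_def ennreal_neg e2ennreal_neg abs_if split: if_splits\<close>)
    have "ereal \<sigma> * y \<le> \<bar>y\<bar>" for y
      using that by (cases y) (auto simp: abs_if split: if_splits)
    then have "(\<integral>\<^sup>+ x. e2ennreal (max (\<sigma> * f x) 0) * indicator C x \<partial>M) \<le> (\<integral>\<^sup>+ x. e2ennreal \<bar>f x\<bar> \<partial>M)"
      by (intro nn_integral_mono) (auto simp: indicator_def intro!: e2ennreal_mono)
    also have "\<dots> < \<infinity>"
      using f by (simp add: ereal_integrable_def)
    finally show "(\<integral>\<^sup>+ x. e2ennreal (max (\<sigma> * f x) 0) * indicator C x \<partial>M) \<noteq> \<infinity>"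
      by simp
  qed
  have "integrable M u"
    unfolding u_def using integrable_real_mult_indicator[OF \<open>C \<in> sets M\<close> integrable_real_of_ereal[OF f]]
    by (simp add: mult.commute)
  then have "(\<integral>x. u x \<partial>M) = enn2real (\<integral>\<^sup>+ x. ennreal (u x) \<partial>M) - enn2real (\<integral>\<^sup>+ x. ennreal (- u x) \<partial>M)"
    by (rule real_lebesgue_integral_def)
  moreover have "ereal (-1) * y = - y" for y :: ereal
    by (cases y) auto
  ultimately show ?thesis
    using parts[of 1] parts[of "-1"] unfolding ereal_set_integral_def u_def[symmetric]
    by (simp add: enn2ereal_eq_ereal_enn2real)
qed

section \<open>Densities with respect to a total-variation convergent sequence\<close>

locale tv_convergence =
  fixes \<mu> :: "'a measure" and \<mu>s :: "nat \<Rightarrow> 'a measure"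
    and g :: "'a \<Rightarrow> real" and gs :: "nat \<Rightarrow> 'a \<Rightarrow> real"
  assumes sets_\<mu>s: "\<And>n. sets (\<mu>s n) = sets \<mu>"
    and finite_\<mu>: "finite_measure \<mu>" and finite_\<mu>s: "\<And>n. finite_measure (\<mu>s n)"
    and tv: "uniform_limit (sets \<mu>) (\<lambda>n. measure (\<mu>s n)) (measure \<mu>) sequentially"
    and integrable_g: "integrable \<mu> g" and integrable_gs: "\<And>n. integrable (\<mu>s n) (gs n)"
begin

sublocale \<mu>: finite_measure \<mu>
  by (rule finite_\<mu>)

lemma space_\<mu>s: "space (\<mu>s n) = space \<mu>"
  using sets_\<mu>s by (rule sets_eq_imp_space_eq)

lemma measurable_g[measurable]: "g \<in> borel_measurable \<mu>"
  using integrable_g by auto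

lemma measurable_gs[measurable]: "gs n \<in> borel_measurable \<mu>"
  using integrable_gs[of n] measurable_cong_sets[OF sets_\<mu>s refl] by auto

lemma eventually_measure_diff_le:
  assumes "e > 0"
  shows "\<forall>\<^sub>F n in sequentially. \<forall>C\<in>sets \<mu>. \<bar>measure (\<mu>s n) C - measure \<mu> C\<bar> \<le> e"
  using uniform_limitD[OF tv assms] by eventually_elim (auto simp: dist_real_def less_imp_le)

definition \<nu> :: "'a set \<Rightarrow> real" where
  "\<nu> C = (\<integral>x. indicator C x * g x \<partial>\<mu>)"

definition \<nu>s :: "nat \<Rightarrow> 'a set \<Rightarrow> real" where
  "\<nu>s n C = (\<integral>x. indicator C x * gs n x \<partial>\<mu>s n)"

definition tail :: "nat \<Rightarrow> real \<Rightarrow> real" where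
  "tail n K = (\<integral>x. \<bar>gs n x\<bar> * indicator {x \<in> space \<mu>. K \<le> \<bar>gs n x\<bar>} x \<partial>\<mu>s n)"

lemma integrable_set_g: "C \<in> sets \<mu> \<Longrightarrow> integrable \<mu> (\<lambda>x. indicator C x * g x)"
  using integrable_real_mult_indicator[OF _ integrable_g] by (simp add: mult.commute)

lemma integrable_set_gs: "C \<in> sets \<mu> \<Longrightarrow> integrable (\<mu>s n) (\<lambda>x. indicator C x * gs n x)"
  using integrable_real_mult_indicator[OF _ integrable_gs, of C n] by (simp add: sets_\<mu>s mult.commute)

lemma integrable_abs_g_indicator: "C \<in> sets \<mu> \<Longrightarrow> integrable \<mu> (\<lambda>x. \<bar>g x\<bar> * indicator C x)"
  using integrable_g by (intro integrable_real_mult_indicator integrable_abs)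

lemma abs_\<nu>_le: "C \<in> sets \<mu> \<Longrightarrow> \<bar>\<nu> C\<bar> \<le> (\<integral>x. \<bar>g x\<bar> * indicator C x \<partial>\<mu>)"
  unfolding \<nu>_def using integral_abs_bound[of \<mu> "\<lambda>x. indicator C x * g x"]
  by (simp add: abs_mult mult.commute)

lemma tail_antimono: "K \<le> K' \<Longrightarrow> tail n K' \<le> tail n K"
  unfolding tail_def using integrable_gs[of n]
  by (intro integral_mono integrable_real_mult_indicator integrable_abs) (auto simp: sets_\<mu>s indicator_def)

lemma tail_eq_\<nu>s_diff:
  assumes "0 \<le> K"
  shows "tail n K = \<nu>s n {x \<in> space \<mu>. K \<le> gs n x} - \<nu>s n {x \<in> space \<mu>. gs n x \<le> - K}"
proof -
  have "tail n K = (\<integral>x. indicator {x \<in> space \<mu>. K \<le> gs n x} x * gs n x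
      - indicator {x \<in> space \<mu>. gs n x \<le> - K} x * gs n x \<partial>\<mu>s n)"
    unfolding tail_def using assms
    by (intro Bochner_Integration.integral_cong) (auto simp: indicator_def space_\<mu>s)
  also have "\<dots> = \<nu>s n {x \<in> space \<mu>. K \<le> gs n x} - \<nu>s n {x \<in> space \<mu>. gs n x \<le> - K}"
    unfolding \<nu>s_def by (intro Bochner_Integration.integral_diff integrable_set_gs) measurable
  finally show ?thesis .
qed

lemma eventually_tail_le:
  assumes lim: "uniform_limit (sets \<mu>) \<nu>s \<nu> sequentially" and "\<epsilon> > 0"
  shows "\<forall>\<^sub>F n in sequentially. \<forall>K\<ge>0.
           tail n K \<le> 2 * (\<integral>x. \<bar>g x\<bar> * indicator {x \<in> space \<mu>. K \<le> \<bar>gs n x\<bar>} x \<partial>\<mu>) + 2 * \<epsilon>"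
  using uniform_limitD[OF lim \<open>\<epsilon> > 0\<close>]
proof eventually_elim
  case (elim n)
  show ?case
  proof (intro allI impI)
    fix K :: real assume "0 \<le> K"
    define D where "D = {x \<in> space \<mu>. K \<le> \<bar>gs n x\<bar>}"
    have "D \<in> sets \<mu>"
      unfolding D_def by measurable
    have \<nu>_le: "\<bar>\<nu> S\<bar> \<le> (\<integral>x. \<bar>g x\<bar> * indicator D x \<partial>\<mu>)" if "S \<in> sets \<mu>" "S \<subseteq> D" for S
    proof -
      have "(\<integral>x. \<bar>g x\<bar> * indicator S x \<partial>\<mu>) \<le> (\<integral>x. \<bar>g x\<bar> * indicator D x \<partial>\<mu>)"
        using that \<open>D \<in> sets \<mu>\<close>
        by (intro integral_mono integrable_abs_g_indicator) (auto simp: indicator_def)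
      then show ?thesis
        using abs_\<nu>_le[OF \<open>S \<in> sets \<mu>\<close>] by linarith
    qed
    have sets: "{x \<in> space \<mu>. K \<le> gs n x} \<in> sets \<mu>" "{x \<in> space \<mu>. gs n x \<le> - K} \<in> sets \<mu>"
      by measurable
    have "tail n K = \<nu>s n {x \<in> space \<mu>. K \<le> gs n x} - \<nu>s n {x \<in> space \<mu>. gs n x \<le> - K}"
      using \<open>0 \<le> K\<close> by (rule tail_eq_\<nu>s_diff)
    also have "\<dots> \<le> \<bar>\<nu> {x \<in> space \<mu>. K \<le> gs n x}\<bar> + \<bar>\<nu> {x \<in> space \<mu>. gs n x \<le> - K}\<bar> + 2 * \<epsilon>"
      using elim[rule_format, OF sets(1)] elim[rule_format, OF sets(2)] by (simp add: dist_real_def)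
    also have "\<dots> \<le> 2 * (\<integral>x. \<bar>g x\<bar> * indicator D x \<partial>\<mu>) + 2 * \<epsilon>"
      using \<nu>_le[OF sets(1)] \<nu>_le[OF sets(2)] \<open>0 \<le> K\<close> by (force simp: D_def)
    finally show "tail n K \<le> 2 * (\<integral>x. \<bar>g x\<bar> * indicator D x \<partial>\<mu>) + 2 * \<epsilon>" .
  qed
qed

lemma eventually_measure_large_values_le:
  assumes lim: "uniform_limit (sets \<mu>) \<nu>s \<nu> sequentially" and "\<eta> > 0"
  shows "\<exists>L>0. \<forall>\<^sub>F n in sequentially. measure \<mu> {x \<in> space \<mu>. L \<le> \<bar>gs n x\<bar>} \<le> \<eta>"
proof -
  define B where "B = 2 * (\<integral>x. \<bar>g x\<bar> \<partial>\<mu>) + 2"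
  have "0 \<le> (\<integral>x. \<bar>g x\<bar> \<partial>\<mu>)"
    by (rule integral_nonneg_AE) auto
  then have "B > 0"
    unfolding B_def by linarith
  define L where "L = 2 * B / \<eta>"
  have "L > 0" "B / L = \<eta> / 2"
    using \<open>B > 0\<close> \<open>\<eta> > 0\<close> by (auto simp: L_def)
  have measure_le: "measure \<mu> {x \<in> space \<mu>. L \<le> \<bar>gs n x\<bar>} \<le> \<eta>"
    if tail_le: "tail n 0 \<le> B" and diff_le: "\<forall>C\<in>sets \<mu>. \<bar>measure (\<mu>s n) C - measure \<mu> C\<bar> \<le> \<eta> / 2" for n
  proof -
    have "tail n 0 = (\<integral>x. \<bar>gs n x\<bar> \<partial>\<mu>s n)"
      unfolding tail_def by (intro Bochner_Integration.integral_cong) (auto simp: space_\<mu>s)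
    then have "measure (\<mu>s n) {x \<in> space \<mu>. L \<le> \<bar>gs n x\<bar>} \<le> tail n 0 / L"
      using integral_Markov_inequality_measure[of "\<mu>s n" "\<lambda>x. \<bar>gs n x\<bar>" "space (\<mu>s n)" L]
        integrable_gs[of n] \<open>L > 0\<close> by (simp add: space_\<mu>s sets_\<mu>s)
    also have "\<dots> \<le> \<eta> / 2"
      using tail_le \<open>L > 0\<close> \<open>B / L = \<eta> / 2\<close> by (metis divide_right_mono less_imp_le)
    finally have "measure (\<mu>s n) {x \<in> space \<mu>. L \<le> \<bar>gs n x\<bar>} \<le> \<eta> / 2" .
    moreover have "{x \<in> space \<mu>. L \<le> \<bar>gs n x\<bar>} \<in> sets \<mu>"
      by measurable
    with diff_le have "\<bar>measure (\<mu>s n) {x \<in> space \<mu>. L \<le> \<bar>gs n x\<bar>} - measure \<mu> {x \<in> space \<mu>. L \<le> \<bar>gs n x\<bar>}\<bar> \<le> \<eta> / 2"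
      by blast
    ultimately show ?thesis
      by linarith
  qed
  have whole_space:
    "(\<integral>x. \<bar>g x\<bar> * indicator {x \<in> space \<mu>. 0 \<le> \<bar>gs n x\<bar>} x \<partial>\<mu>) = (\<integral>x. \<bar>g x\<bar> \<partial>\<mu>)" for n
    by (intro Bochner_Integration.integral_cong) auto
  have "\<forall>\<^sub>F n in sequentially. tail n 0 \<le> B"
    using eventually_tail_le[OF lim zero_less_one]
    by eventually_elim (use whole_space in \<open>force simp: B_def\<close>)
  then have "\<forall>\<^sub>F n in sequentially. measure \<mu> {x \<in> space \<mu>. L \<le> \<bar>gs n x\<bar>} \<le> \<eta>"
    using eventually_measure_diff_le[of "\<eta> / 2"] \<open>\<eta> > 0\<close>
    by (auto elim: eventually_elim2 intro!: measure_le)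
  with \<open>L > 0\<close> show ?thesis
    by blast
qed

lemma integrable_set_gs_bounded:
  assumes "C \<in> sets \<mu>" "0 \<le> L" "\<And>x. x \<in> C \<Longrightarrow> \<bar>gs n x\<bar> \<le> L"
  shows "integrable \<mu> (\<lambda>x. indicator C x * gs n x)"
  using assms by (intro \<mu>.integrable_const_bound[where B = L]) (auto simp: indicator_def)

lemma set_integral_deviation_le:
  assumes "C \<in> sets \<mu>" "L > 0" "\<And>x. x \<in> C \<Longrightarrow> \<bar>gs n x\<bar> \<le> L"
    and diff_le: "\<forall>C\<in>sets \<mu>. \<bar>measure (\<mu>s n) C - measure \<mu> C\<bar> \<le> e"
  shows "\<bar>\<integral>x. indicator C x * (gs n x - g x) \<partial>\<mu>\<bar> \<le> 2 * L * e + \<bar>\<nu>s n C - \<nu> C\<bar>"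
proof -
  have "(\<integral>x. indicator C x * (gs n x - g x) \<partial>\<mu>) = (\<integral>x. indicator C x * gs n x \<partial>\<mu>) - \<nu> C"
    unfolding \<nu>_def using integrable_set_gs_bounded[OF assms(1) less_imp_le[OF assms(2)] assms(3)] integrable_set_g[OF assms(1)]
    by (simp add: right_diff_distrib)
  moreover have "\<bar>\<nu>s n C - (\<integral>x. indicator C x * gs n x \<partial>\<mu>)\<bar> \<le> 2 * L * e"
    unfolding \<nu>s_def using assms
    by (intro bounded_integral_diff_le[OF sets_\<mu>s finite_\<mu>s finite_\<mu> \<open>L > 0\<close>])
      (auto simp: indicator_def)
  ultimately show ?thesis
    by linarith
qed

lemma measure_deviation_le:
  assumes "\<epsilon> > 0" "L > 0"
    and diff_le: "\<forall>C\<in>sets \<mu>. \<bar>measure (\<mu>s n) C - measure \<mu> C\<bar> \<le> e"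
    and \<nu>_diff_le: "\<forall>C\<in>sets \<mu>. \<bar>\<nu>s n C - \<nu> C\<bar> \<le> d"
  shows "measure \<mu> {x \<in> space \<mu>. \<epsilon> \<le> \<bar>gs n x - g x\<bar>}
           \<le> 2 * ((2 * L * e + d) / \<epsilon>) + measure \<mu> {x \<in> space \<mu>. L \<le> \<bar>gs n x\<bar>}"
proof -
  \<comment> \<open>\<open>\<sigma> = \<plusminus>1\<close> treats the two signs of \<open>gs n - g\<close> at once\<close>
  define C where "C \<sigma> = {x \<in> space \<mu>. \<epsilon> \<le> \<sigma> * (gs n x - g x) \<and> \<bar>gs n x\<bar> \<le> L}" for \<sigma> :: real
  have C_sets: "C \<sigma> \<in> sets \<mu>" for \<sigma>
    unfolding C_def by measurable
  have C_le: "measure \<mu> (C \<sigma>) \<le> (2 * L * e + d) / \<epsilon>" if "\<sigma> = 1 \<or> \<sigma> = -1" for \<sigma>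
  proof -
    have int: "integrable \<mu> (\<lambda>x. indicator (C \<sigma>) x * (gs n x - g x))"
      using integrable_set_gs_bounded[OF C_sets less_imp_le[OF \<open>L > 0\<close>], of \<sigma> n] integrable_set_g[OF C_sets]
      by (auto simp: C_def right_diff_distrib)
    then have "integrable \<mu> (\<lambda>x. \<sigma> * (indicator (C \<sigma>) x * (gs n x - g x)))"
      by (rule integrable_mult_right)
    then have int_\<sigma>: "integrable \<mu> (\<lambda>x. indicator (C \<sigma>) x * (\<sigma> * (gs n x - g x)))"
      by (subst mult.left_commute)
    have "\<epsilon> * measure \<mu> (C \<sigma>) \<le> (\<integral>x. indicator (C \<sigma>) x * (\<sigma> * (gs n x - g x)) \<partial>\<mu>)"
      by (intro measure_mult_le_set_integral[OF finite_\<mu> C_sets int_\<sigma>]) (auto simp: C_def)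
    also have "\<dots> = \<sigma> * (\<integral>x. indicator (C \<sigma>) x * (gs n x - g x) \<partial>\<mu>)"
      by (simp add: mult.left_commute)
    also have "\<dots> \<le> \<bar>\<integral>x. indicator (C \<sigma>) x * (gs n x - g x) \<partial>\<mu>\<bar>"
      using that by auto
    also have "\<dots> \<le> 2 * L * e + \<bar>\<nu>s n (C \<sigma>) - \<nu> (C \<sigma>)\<bar>"
      by (rule set_integral_deviation_le[OF C_sets \<open>L > 0\<close> _ diff_le]) (simp add: C_def)
    also have "\<dots> \<le> 2 * L * e + d"
      using \<nu>_diff_le C_sets by simp
    finally show ?thesis
      using \<open>\<epsilon> > 0\<close> by (simp add: pos_le_divide_eq mult.commute)
  qed
  define D where "D = {x \<in> space \<mu>. L \<le> \<bar>gs n x\<bar>}"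
  have "D \<in> sets \<mu>"
    unfolding D_def by measurable
  have "{x \<in> space \<mu>. \<epsilon> \<le> \<bar>gs n x - g x\<bar>} \<subseteq> C 1 \<union> C (-1) \<union> D"
    by (auto simp: C_def D_def abs_le_iff)
  then have "measure \<mu> {x \<in> space \<mu>. \<epsilon> \<le> \<bar>gs n x - g x\<bar>} \<le> measure \<mu> (C 1 \<union> C (-1) \<union> D)"
    using C_sets \<open>D \<in> sets \<mu>\<close> by (intro \<mu>.finite_measure_mono) auto
  moreover have "measure \<mu> (C 1 \<union> C (-1) \<union> D) \<le> measure \<mu> (C 1 \<union> C (-1)) + measure \<mu> D"
    using C_sets \<open>D \<in> sets \<mu>\<close> by (intro measure_Un_le) auto
  moreover have "measure \<mu> (C 1 \<union> C (-1)) \<le> measure \<mu> (C 1) + measure \<mu> (C (-1))"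
    by (rule measure_Un_le[OF C_sets C_sets])
  ultimately show ?thesis
    unfolding D_def[symmetric]
    using C_le[of 1] C_le[of "-1"] by linarith
qed

lemma converges_in_measure_if_uniform_limit:
  assumes lim: "uniform_limit (sets \<mu>) \<nu>s \<nu> sequentially" and "\<epsilon> > 0"
  shows "(\<lambda>n. measure \<mu> {x \<in> space \<mu>. \<epsilon> \<le> \<bar>gs n x - g x\<bar>}) \<longlonglongrightarrow> 0"
proof (rule tendsto_zero_if_eventually_le)
  fix \<eta> :: real assume "\<eta> > 0"
  then obtain L where "L > 0" and large: "\<forall>\<^sub>F n in sequentially. measure \<mu> {x \<in> space \<mu>. L \<le> \<bar>gs n x\<bar>} \<le> \<eta> / 2"
    using eventually_measure_large_values_le[OF lim, of "\<eta> / 2"] by auto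
  define e where "e = \<epsilon> * \<eta> / (16 * L)"
  have "e > 0" "2 * ((2 * L * e + \<epsilon> * \<eta> / 8) / \<epsilon>) = \<eta> / 2"
    using \<open>\<epsilon> > 0\<close> \<open>\<eta> > 0\<close> \<open>L > 0\<close> by (auto simp: e_def field_simps)
  have "\<forall>\<^sub>F n in sequentially. \<forall>C\<in>sets \<mu>. \<bar>\<nu>s n C - \<nu> C\<bar> \<le> \<epsilon> * \<eta> / 8"
    using uniform_limitD[OF lim, of "\<epsilon> * \<eta> / 8"] \<open>\<epsilon> > 0\<close> \<open>\<eta> > 0\<close>
    by (auto elim!: eventually_mono simp: dist_real_def less_imp_le)
  with eventually_measure_diff_le[OF \<open>e > 0\<close>] large
  show "\<forall>\<^sub>F n in sequentially. measure \<mu> {x \<in> space \<mu>. \<epsilon> \<le> \<bar>gs n x - g x\<bar>} \<le> \<eta>"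
  proof eventually_elim
    case (elim n)
    then show ?case
      using measure_deviation_le[OF \<open>\<epsilon> > 0\<close> \<open>L > 0\<close> elim(1) elim(3)]
        \<open>2 * ((2 * L * e + \<epsilon> * \<eta> / 8) / \<epsilon>) = \<eta> / 2\<close> by linarith
  qed
qed simp

lemma tails_vanish_if_uniform_limit:
  assumes lim: "uniform_limit (sets \<mu>) \<nu>s \<nu> sequentially" and "\<eta> > 0"
  shows "\<exists>K. \<forall>\<^sub>F n in sequentially. tail n K \<le> \<eta>"
proof -
  obtain \<delta> where "\<delta> > 0"
    and small: "\<And>A. A \<in> sets \<mu> \<Longrightarrow> measure \<mu> A \<le> \<delta> \<Longrightarrow> (\<integral>x. \<bar>g x\<bar> * indicator A x \<partial>\<mu>) \<le> \<eta> / 4"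
    using integral_abs_small_on_small_sets[OF finite_\<mu> integrable_g, of "\<eta> / 4"] \<open>\<eta> > 0\<close> by auto
  obtain L where "L > 0" and large: "\<forall>\<^sub>F n in sequentially. measure \<mu> {x \<in> space \<mu>. L \<le> \<bar>gs n x\<bar>} \<le> \<delta>"
    using eventually_measure_large_values_le[OF lim \<open>\<delta> > 0\<close>] by auto
  have "\<eta> / 4 > 0"
    using \<open>\<eta> > 0\<close> by simp
  have "\<forall>\<^sub>F n in sequentially. tail n L \<le> \<eta>"
    using eventually_tail_le[OF lim \<open>\<eta> / 4 > 0\<close>] large
  proof eventually_elim
    case (elim n)
    have "{x \<in> space \<mu>. L \<le> \<bar>gs n x\<bar>} \<in> sets \<mu>"
      by measurable
    then have "(\<integral>x. \<bar>g x\<bar> * indicator {x \<in> space \<mu>. L \<le> \<bar>gs n x\<bar>} x \<partial>\<mu>) \<le> \<eta> / 4"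
      using elim(2) by (rule small)
    moreover have "tail n L \<le> 2 * (\<integral>x. \<bar>g x\<bar> * indicator {x \<in> space \<mu>. L \<le> \<bar>gs n x\<bar>} x \<partial>\<mu>) + 2 * (\<eta> / 4)"
      using elim(1) \<open>L > 0\<close> by simp
    ultimately show ?case
      by linarith
  qed
  then show ?thesis ..
qed

lemma abs_\<nu>s_diff_le:
  assumes C: "C \<in> sets \<mu>" and "K > 0" "0 \<le> \<delta>"
    and diff_le: "\<forall>C\<in>sets \<mu>. \<bar>measure (\<mu>s n) C - measure \<mu> C\<bar> \<le> e"
  shows "\<bar>\<nu>s n C - \<nu> C\<bar> \<le> tail n K + 2 * K * e
           + (\<delta> * measure \<mu> (space \<mu>) + 2 * K * measure \<mu> {x \<in> space \<mu>. \<delta> \<le> \<bar>gs n x - g x\<bar>})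
           + (\<integral>x. \<bar>g x\<bar> * indicator {x \<in> space \<mu>. K \<le> \<bar>g x\<bar>} x \<partial>\<mu>)"
proof -
  have "0 \<le> K"
    using \<open>K > 0\<close> by simp
  have "\<bar>\<nu>s n C - (\<integral>x. indicator C x * truncate K (gs n x) \<partial>\<mu>s n)\<bar> \<le> tail n K"
    unfolding \<nu>s_def tail_def
    using set_integral_truncate_error[OF finite_\<mu>s integrable_gs _ \<open>0 \<le> K\<close>] C
    by (simp add: sets_\<mu>s space_\<mu>s)
  moreover have "\<bar>(\<integral>x. indicator C x * truncate K (gs n x) \<partial>\<mu>s n) - (\<integral>x. indicator C x * truncate K (gs n x) \<partial>\<mu>)\<bar>
      \<le> 2 * K * e"
    using C diff_le truncate_abs_le[OF \<open>0 \<le> K\<close>] \<open>0 \<le> K\<close>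
    by (intro bounded_integral_diff_le[OF sets_\<mu>s finite_\<mu>s finite_\<mu> \<open>K > 0\<close>])
      (auto simp: indicator_def)
  moreover have "\<bar>(\<integral>x. indicator C x * truncate K (gs n x) \<partial>\<mu>) - (\<integral>x. indicator C x * truncate K (g x) \<partial>\<mu>)\<bar>
      \<le> \<delta> * measure \<mu> (space \<mu>) + 2 * K * measure \<mu> {x \<in> space \<mu>. \<delta> \<le> \<bar>gs n x - g x\<bar>}"
    by (rule set_integral_truncate_diff_le[OF finite_\<mu> measurable_gs measurable_g C \<open>0 \<le> K\<close> \<open>0 \<le> \<delta>\<close>])
  moreover have "\<bar>(\<integral>x. indicator C x * truncate K (g x) \<partial>\<mu>) - \<nu> C\<bar>
      \<le> (\<integral>x. \<bar>g x\<bar> * indicator {x \<in> space \<mu>. K \<le> \<bar>g x\<bar>} x \<partial>\<mu>)"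
    unfolding \<nu>_def using set_integral_truncate_error[OF finite_\<mu> integrable_g C \<open>0 \<le> K\<close>]
    by (simp add: abs_minus_commute)
  ultimately show ?thesis
    by linarith
qed

lemma uniform_limit_if_converges_in_measure_tails_vanish:
  assumes in_measure: "\<And>\<epsilon>. \<epsilon> > 0 \<Longrightarrow> (\<lambda>n. measure \<mu> {x \<in> space \<mu>. \<epsilon> \<le> \<bar>gs n x - g x\<bar>}) \<longlonglongrightarrow> 0"
    and tails: "\<And>\<eta>. \<eta> > 0 \<Longrightarrow> \<exists>K. \<forall>\<^sub>F n in sequentially. tail n K \<le> \<eta>"
  shows "uniform_limit (sets \<mu>) \<nu>s \<nu> sequentially"
proof (rule uniform_limitI)
  fix \<epsilon>' :: real assume "\<epsilon>' > 0"
  define \<epsilon> where "\<epsilon> = \<epsilon>' / 10"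
  have "\<epsilon> > 0"
    using \<open>\<epsilon>' > 0\<close> by (simp add: \<epsilon>_def)
  obtain K1 where K1: "\<forall>\<^sub>F n in sequentially. tail n K1 \<le> \<epsilon>"
    using tails \<open>\<epsilon> > 0\<close> by blast
  have "\<forall>\<^sub>F K in at_top. (\<integral>x. \<bar>g x\<bar> * indicator {x \<in> space \<mu>. K \<le> \<bar>g x\<bar>} x \<partial>\<mu>) < \<epsilon> \<and> max 1 K1 \<le> K"
    using order_tendstoD(2)[OF integral_tail_tendsto_0[OF integrable_g] \<open>\<epsilon> > 0\<close>] eventually_ge_at_top
    by (rule eventually_conj)
  then obtain K where K: "(\<integral>x. \<bar>g x\<bar> * indicator {x \<in> space \<mu>. K \<le> \<bar>g x\<bar>} x \<partial>\<mu>) < \<epsilon>" "1 \<le> K" "K1 \<le> K"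
    using eventually_happens by fastforce
  define \<delta> where "\<delta> = \<epsilon> / (measure \<mu> (space \<mu>) + 1)"
  define e where "e = \<epsilon> / (2 * K)"
  have "0 < measure \<mu> (space \<mu>) + 1"
    using measure_nonneg[of \<mu> "space \<mu>"] by linarith
  then have "\<delta> > 0" "\<delta> * measure \<mu> (space \<mu>) \<le> \<epsilon>" "e > 0" "2 * K * e = \<epsilon>"
    using \<open>\<epsilon> > 0\<close> K(2) by (auto simp: \<delta>_def e_def field_simps)
  have "\<forall>\<^sub>F n in sequentially. measure \<mu> {x \<in> space \<mu>. \<delta> \<le> \<bar>gs n x - g x\<bar>} < e"
    using order_tendstoD(2)[OF in_measure[OF \<open>\<delta> > 0\<close>] \<open>e > 0\<close>] .
  with K1 eventually_measure_diff_le[OF \<open>e > 0\<close>]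
  show "\<forall>\<^sub>F n in sequentially. \<forall>C\<in>sets \<mu>. dist (\<nu>s n C) (\<nu> C) < \<epsilon>'"
  proof eventually_elim
    case (elim n)
    have tail_le: "tail n K \<le> \<epsilon>"
      using tail_antimono[OF K(3), of n] elim(1) by linarith
    have deviation_le: "2 * K * measure \<mu> {x \<in> space \<mu>. \<delta> \<le> \<bar>gs n x - g x\<bar>} \<le> 2 * K * e"
      using elim(3) K(2) by (intro mult_left_mono) auto
    have bound: "\<bar>\<nu>s n C - \<nu> C\<bar> \<le> 5 * \<epsilon>" if "C \<in> sets \<mu>" for C
    proof -
      have "\<bar>\<nu>s n C - \<nu> C\<bar> \<le> tail n K + 2 * K * e
          + (\<delta> * measure \<mu> (space \<mu>) + 2 * K * measure \<mu> {x \<in> space \<mu>. \<delta> \<le> \<bar>gs n x - g x\<bar>})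
          + (\<integral>x. \<bar>g x\<bar> * indicator {x \<in> space \<mu>. K \<le> \<bar>g x\<bar>} x \<partial>\<mu>)"
        by (rule abs_\<nu>s_diff_le[OF that _ _ elim(2)]) (use K(2) \<open>\<delta> > 0\<close> in auto)
      then show ?thesis
        using tail_le deviation_le K(1) \<open>\<delta> * measure \<mu> (space \<mu>) \<le> \<epsilon>\<close> \<open>2 * K * e = \<epsilon>\<close> by linarith
    qed
    show ?case
    proof
      fix C assume "C \<in> sets \<mu>"
      then have "\<bar>\<nu>s n C - \<nu> C\<bar> \<le> 5 * \<epsilon>"
        by (rule bound)
      then show "dist (\<nu>s n C) (\<nu> C) < \<epsilon>'"
        using \<open>\<epsilon>' > 0\<close> by (simp add: dist_real_def \<epsilon>_def)
    qed
  qed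
qed

lemma measure_tendsto_0_if_null:
  assumes "\<And>n. A n \<in> sets \<mu>" "\<And>n. measure (\<mu>s n) (A n) = 0"
  shows "(\<lambda>n. measure \<mu> (A n)) \<longlonglongrightarrow> 0"
proof (rule tendsto_zero_if_eventually_le)
  fix \<eta> :: real assume "\<eta> > 0"
  show "\<forall>\<^sub>F n in sequentially. measure \<mu> (A n) \<le> \<eta>"
    using eventually_measure_diff_le[OF \<open>\<eta> > 0\<close>]
  proof eventually_elim
    case (elim n)
    then have "\<bar>measure (\<mu>s n) (A n) - measure \<mu> (A n)\<bar> \<le> \<eta>"
      using assms(1) by blast
    then show ?case
      using assms(2) by simp
  qed
qed simp

theorem uniform_limit_set_integrals_iff:
  "uniform_limit (sets \<mu>) \<nu>s \<nu> sequentially \<longleftrightarrow>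
     (\<forall>\<epsilon>>0. (\<lambda>n. measure \<mu> {x \<in> space \<mu>. \<epsilon> \<le> \<bar>gs n x - g x\<bar>}) \<longlonglongrightarrow> 0) \<and>
     (\<forall>\<eta>>0. \<exists>K. \<forall>\<^sub>F n in sequentially. tail n K \<le> \<eta>)"
proof
  assume lim: "uniform_limit (sets \<mu>) \<nu>s \<nu> sequentially"
  show "(\<forall>\<epsilon>>0. (\<lambda>n. measure \<mu> {x \<in> space \<mu>. \<epsilon> \<le> \<bar>gs n x - g x\<bar>}) \<longlonglongrightarrow> 0) \<and>
      (\<forall>\<eta>>0. \<exists>K. \<forall>\<^sub>F n in sequentially. tail n K \<le> \<eta>)"
    using converges_in_measure_if_uniform_limit[OF lim] tails_vanish_if_uniform_limit[OF lim] by blast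
qed (intro uniform_limit_if_converges_in_measure_tails_vanish; blast)

end

locale ereal_tv_convergence =
  fixes \<mu> :: "'a measure" and \<mu>s :: "nat \<Rightarrow> 'a measure"
    and f :: "'a \<Rightarrow> ereal" and fs :: "nat \<Rightarrow> 'a \<Rightarrow> ereal"
  assumes sets_\<mu>s: "\<And>n. sets (\<mu>s n) = sets \<mu>"
    and finite_\<mu>: "finite_measure \<mu>" and finite_\<mu>s: "\<And>n. finite_measure (\<mu>s n)"
    and tv: "uniform_limit (sets \<mu>) (\<lambda>n. measure (\<mu>s n)) (measure \<mu>) sequentially"
    and integrable_f: "ereal_integrable \<mu> f" and integrable_fs: "\<And>n. ereal_integrable (\<mu>s n) (fs n)"

sublocale ereal_tv_convergence \<subseteq> tv_convergence \<mu> \<mu>s "\<lambda>x. real_of_ereal (f x)" "\<lambda>n x. real_of_ereal (fs n x)"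
  by (rule tv_convergence.intro[OF sets_\<mu>s finite_\<mu> finite_\<mu>s tv
        integrable_real_of_ereal[OF integrable_f] integrable_real_of_ereal[OF integrable_fs]])

context ereal_tv_convergence
begin

lemma measurable_f[measurable]: "f \<in> borel_measurable \<mu>"
  using integrable_f by (simp add: ereal_integrable_def)

lemma measurable_fs[measurable]: "fs n \<in> borel_measurable \<mu>"
  using integrable_fs[of n] measurable_cong_sets[OF sets_\<mu>s refl] by (auto simp: ereal_integrable_def)

lemma SUP_ereal_set_integral_tendsto_0_iff:
  "(\<lambda>n. SUP C\<in>sets \<mu>. \<bar>ereal_set_integral (\<mu>s n) C (fs n) - ereal_set_integral \<mu> C f\<bar>) \<longlonglongrightarrow> 0
    \<longleftrightarrow> uniform_limit (sets \<mu>) \<nu>s \<nu> sequentially"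
proof -
  have pointwise: "\<bar>ereal_set_integral (\<mu>s n) C (fs n) - ereal_set_integral \<mu> C f\<bar> = ereal (dist (\<nu>s n C) (\<nu> C))"
    if "C \<in> sets \<mu>" for n C
    using ereal_set_integral_eq_integral[OF integrable_fs, of C n]
      ereal_set_integral_eq_integral[OF integrable_f that] that
    by (simp add: \<nu>s_def \<nu>_def dist_real_def sets_\<mu>s)
  have "sets \<mu> \<noteq> {}"
    using sets.empty_sets by blast
  moreover have "(\<lambda>n. SUP C\<in>sets \<mu>. \<bar>ereal_set_integral (\<mu>s n) C (fs n) - ereal_set_integral \<mu> C f\<bar>)
      = (\<lambda>n. SUP C\<in>sets \<mu>. ereal (dist (\<nu>s n C) (\<nu> C)))"
    using pointwise by (intro ext SUP_cong) auto
  ultimately show ?thesis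
    by (simp add: uniform_limit_iff_SUP_dist_tendsto_0)
qed

lemma converges_in_measure_iff:
  "converges_in_measure \<mu> fs f \<longleftrightarrow>
     (\<forall>\<epsilon>>0. (\<lambda>n. measure \<mu> {x \<in> space \<mu>. \<epsilon> \<le> \<bar>real_of_ereal (fs n x) - real_of_ereal (f x)\<bar>}) \<longlonglongrightarrow> 0)"
proof -
  define Z where "Z n = {x \<in> space \<mu>. \<bar>f x\<bar> = \<infinity>} \<union> {x \<in> space \<mu>. \<bar>fs n x\<bar> = \<infinity>}" for n
  have Z_sets: "Z n \<in> sets \<mu>" for n
    unfolding Z_def by measurable
  have "(\<lambda>n. measure \<mu> {x \<in> space \<mu>. \<bar>fs n x\<bar> = \<infinity>}) \<longlonglongrightarrow> 0"
    using ereal_integrable_measure_infinite[OF integrable_fs]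
    by (intro measure_tendsto_0_if_null) (auto simp: space_\<mu>s)
  then have Z_null: "(\<lambda>n. measure \<mu> (Z n)) \<longlonglongrightarrow> 0"
  proof (rule Lim_null_comparison[rotated])
    show "\<forall>\<^sub>F n in sequentially. norm (measure \<mu> (Z n)) \<le> measure \<mu> {x \<in> space \<mu>. \<bar>fs n x\<bar> = \<infinity>}"
      using measure_Un_le[of "{x \<in> space \<mu>. \<bar>f x\<bar> = \<infinity>}" \<mu> "{x \<in> space \<mu>. \<bar>fs _ x\<bar> = \<infinity>}"]
        ereal_integrable_measure_infinite[OF integrable_f]
      by (intro always_eventually allI) (simp add: Z_def)
  qed
  have "(\<lambda>n. emeasure \<mu> {x \<in> space \<mu>. ereal \<epsilon> \<le> \<bar>fs n x - f x\<bar>}) \<longlonglongrightarrow> 0 \<longleftrightarrow>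
      (\<lambda>n. measure \<mu> {x \<in> space \<mu>. \<epsilon> \<le> \<bar>real_of_ereal (fs n x) - real_of_ereal (f x)\<bar>}) \<longlonglongrightarrow> 0" for \<epsilon>
  proof -
    have "ereal \<epsilon> \<le> \<bar>fs n x - f x\<bar> \<longleftrightarrow> \<epsilon> \<le> \<bar>real_of_ereal (fs n x) - real_of_ereal (f x)\<bar>"
      if "x \<in> space \<mu>" "x \<notin> Z n" for n x
      using that by (cases "f x"; cases "fs n x") (auto simp: Z_def)
    then have same: "{x \<in> space \<mu>. ereal \<epsilon> \<le> \<bar>fs n x - f x\<bar>} - Z n
        = {x \<in> space \<mu>. \<epsilon> \<le> \<bar>real_of_ereal (fs n x) - real_of_ereal (f x)\<bar>} - Z n" for n
      by blast
    have E_sets: "{x \<in> space \<mu>. ereal \<epsilon> \<le> \<bar>fs n x - f x\<bar>} \<in> sets \<mu>" for n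
      by measurable
    have R_sets: "{x \<in> space \<mu>. \<epsilon> \<le> \<bar>real_of_ereal (fs n x) - real_of_ereal (f x)\<bar>} \<in> sets \<mu>" for n
      by measurable
    have "(\<lambda>n. emeasure \<mu> {x \<in> space \<mu>. ereal \<epsilon> \<le> \<bar>fs n x - f x\<bar>}) \<longlonglongrightarrow> 0 \<longleftrightarrow>
        (\<lambda>n. measure \<mu> {x \<in> space \<mu>. ereal \<epsilon> \<le> \<bar>fs n x - f x\<bar>}) \<longlonglongrightarrow> 0"
      by (simp add: \<mu>.emeasure_eq_measure ennreal_tendsto_0_iff)
    also have "\<dots> \<longleftrightarrow> (\<lambda>n. measure \<mu> {x \<in> space \<mu>. \<epsilon> \<le> \<bar>real_of_ereal (fs n x) - real_of_ereal (f x)\<bar>}) \<longlonglongrightarrow> 0"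
      by (rule measure_tendsto_0_cong[OF finite_\<mu> E_sets R_sets Z_sets Z_null same])
    finally show ?thesis .
  qed
  then show ?thesis
    unfolding converges_in_measure_def by simp
qed

lemma nn_integral_tail_eq:
  "(\<integral>\<^sup>+ x. e2ennreal \<bar>fs n x\<bar> * indicator {x. ereal K \<le> \<bar>fs n x\<bar>} x \<partial>\<mu>s n) = ennreal (tail n K)"
proof -
  have "ennreal (tail n K)
      = (\<integral>\<^sup>+ x. ennreal (\<bar>real_of_ereal (fs n x)\<bar> * indicator {x \<in> space \<mu>. K \<le> \<bar>real_of_ereal (fs n x)\<bar>} x) \<partial>\<mu>s n)"
    unfolding tail_def using integrable_gs[of n]
    by (intro nn_integral_eq_integral[symmetric] integrable_real_mult_indicator integrable_abs AE_I2)
      (auto simp: sets_\<mu>s simp del: abs_real_of_ereal)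
  also have "\<dots> = (\<integral>\<^sup>+ x. e2ennreal \<bar>fs n x\<bar> * indicator {x. ereal K \<le> \<bar>fs n x\<bar>} x \<partial>\<mu>s n)"
    using ereal_integrable_AE_finite[OF integrable_fs, of n] AE_space[of "\<mu>s n"]
  proof (intro nn_integral_cong_AE, eventually_elim)
    case (elim x)
    then show ?case
      by (cases "fs n x") (auto simp: indicator_def space_\<mu>s)
  qed
  finally show ?thesis ..
qed

lemma asympt_unif_integrable_iff:
  "asympt_unif_integrable fs \<mu>s \<longleftrightarrow> (\<forall>\<eta>>0. \<exists>K. \<forall>\<^sub>F n in sequentially. tail n K \<le> \<eta>)"
  unfolding asympt_unif_integrable_def nn_integral_tail_eq
  by (rule tendsto_limsup_ennreal_0_iff) (rule tail_antimono)

theorem set_integrals_converge_iff: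
  "(\<lambda>n. SUP C\<in>sets \<mu>. \<bar>ereal_set_integral (\<mu>s n) C (fs n) - ereal_set_integral \<mu> C f\<bar>) \<longlonglongrightarrow> 0
    \<longleftrightarrow> converges_in_measure \<mu> fs f \<and> asympt_unif_integrable fs \<mu>s"
  unfolding SUP_ereal_set_integral_tendsto_0_iff converges_in_measure_iff asympt_unif_integrable_iff
  by (rule uniform_limit_set_integrals_iff)

end

theorem proposition4p2:
  fixes M :: "'a measure" and \<mu> :: "'a measure" and \<mu>s :: "nat \<Rightarrow> 'a measure"
    and f :: "'a \<Rightarrow> ereal" and fs :: "nat \<Rightarrow> 'a \<Rightarrow> ereal"
  assumes sets_mu: "sets \<mu> = sets M"
    and sets_mus: "\<And>n. sets (\<mu>s n) = sets M"
    and fin_mu: "finite_measure \<mu>"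
    and fin_mus: "\<And>n. finite_measure (\<mu>s n)"
    and tv: "tv_converges \<mu>s \<mu>"
    and f_meas: "f \<in> borel_measurable M"
    and fs_meas: "\<And>n. fs n \<in> borel_measurable M"
    and f_int: "ereal_integrable \<mu> f"
    and fs_int: "\<And>n. ereal_integrable (\<mu>s n) (fs n)"
  shows "(\<lambda>n. SUP C \<in> sets M.
            \<bar>ereal_set_integral (\<mu>s n) C (fs n) - ereal_set_integral \<mu> C f\<bar>) \<longlonglongrightarrow> 0
         \<longleftrightarrow> converges_in_measure \<mu> fs f \<and> asympt_unif_integrable fs \<mu>s"
proof -
  \<comment> \<open>\<open>f_meas\<close> and \<open>fs_meas\<close> are implied by \<open>f_int\<close> and \<open>fs_int\<close>\<close>
  have sets_\<mu>s: "sets (\<mu>s n) = sets \<mu>" for n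
    using sets_mus sets_mu by simp
  have "uniform_limit (sets \<mu>) (\<lambda>n. measure (\<mu>s n)) (measure \<mu>) sequentially"
    using tv sets.empty_sets[of \<mu>] unfolding tv_converges_def
    by (subst uniform_limit_iff_SUP_dist_tendsto_0) (auto simp: dist_real_def)
  then interpret ereal_tv_convergence \<mu> \<mu>s f fs
    by (rule ereal_tv_convergence.intro[OF sets_\<mu>s fin_mu fin_mus _ f_int fs_int])
  show ?thesis
    unfolding sets_mu[symmetric] by (rule set_integrals_converge_iff)
qed

end
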